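(* Let $G=(V,E)$ be a finite graph with a population function $p:V\to\mathbb{R}_{>0}$, let $k\ge 2$, $0<\epsilon<1$, and let $T=p(V)/k$, where $h(W)=\sum_{v\in W}h(v)$ for $W\subseteq V$ and any $h:V\to\mathbb{R}$. Let $P=\{P_1,\dots,P_k\}$ and $P'=\{P_1',\dots,P_k'\}$ be districting plans in $\mathcal{P}_{k,\epsilon}(G)$ with vertex sets $V_1,\dots,V_k$ and $V_1',\dots,V_k'$. Suppose $P'$ is a graph-preserving one-way perturbation of $P$: there are indices $i\ne j$ and a nonempty set $V_{ij}\subseteq V_i$ such that $V_i'=V_i\setminus V_{ij}$, $V_j'=V_j\cup V_{ij}$, $V_m'=V_m$ for all $m\ne i,j$, and the map $w_m\mapsto w_m'$ is an isomorphism between the district dual graphs $G_P$ and $G_{P'}$. Let $a,b:V\to\mathbb{R}$ satisfy $0\le a(v)\le b(v)\le p(v)$ and $b(v)>0$ for all $v\in V$, and for $W\subseteq V$ nonempty write $f(W)=a(W)/b(W)$; define filtration functions on the district dual graphs by $f(w_m)=f(V_m)$ and $f(w_m')=f(V_m')$. Let $\alpha>0$ satisfy $b(W)/p(W)\ge \alpha$ for $W=V_i,V_i',V_j,V_j'$. Let $\mathcal{D}_P$ and $\mathcal{D}_{P'}$ be the degree-$0$ persistence diagrams of the sublevel-set filtrations of $G_P$ and $G_{P'}$ induced by $f$. Then $$d_\infty(\mathcal{D}_P,\mathcal{D}_{P'})\le \frac{2\epsilon}{\alpha(1-\epsilon)}\max\Bigl(\bigl|f(V_{ij})-f(V_i)\bigr|,\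 \bigl|f(V_{ij})-f(V_j)\bigr|\Bigr).$$
   Context: Districting plans: $\mathcal{P}_{k,\epsilon}(G)$ is the set of partitions $P=\{P_1,\dots,P_k\}$ of $G$ into induced subgraphs $P_m=(V_m,E_m)$ on a vertex partition $V=V_1\sqcup\dots\sqcup V_k$, with each $P_m$ connected and $(1-\epsilon)T\le p(V_m)\le(1+\epsilon)T$. District dual graph $G_P$: vertices $w_1,\dots,w_k$ (one per district), with $w_m,w_l$ adjacent iff some edge of $E$ joins $V_m$ and $V_l$. Sublevel-set filtration and degree-0 persistence diagram: for a finite graph $H$ with vertex function $F$, for each $t$ let $H^t$ be the subgraph induced on vertices with $F\le t$ (edges appear once both endpoints are present); the diagram $\mathcal{D}_F$ is the multiset of (birth, death) pairs $(b,d)$, $d\in\mathbb{R}\cup\{\infty\}$, of connected components of $H^t$ as $t$ increases, with the elder rule (on merging, the younger component dies) and $d=\infty$ for components that never die; diagonal points may be ignored. Bottleneck distance $d_\infty$: infimum over partial bijections $\phi$ between the diagrams of the maximum of $\|x-\phi(x)\|_\infty$ over matched points and of the $\ell_\infty$ distance to the diagonal (i.e.\ $(d-b)/2$) over unmatched points, with $\infty-\infty=0$. *)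

theory Defs
  imports Complex_Main "HOL-Library.Multiset" "HOL-Library.Extended_Real"
begin

definition induced_rel :: "'a set \<Rightarrow> ('a \<Rightarrow> 'a \<Rightarrow> bool) \<Rightarrow> 'a \<Rightarrow> 'a \<Rightarrow> bool" where
  "induced_rel S E u v \<longleftrightarrow> u \<in> S \<and> v \<in> S \<and> E u v"

definition connected_set :: "'a set \<Rightarrow> ('a \<Rightarrow> 'a \<Rightarrow> bool) \<Rightarrow> bool" where
  "connected_set S E \<longleftrightarrow> S \<noteq> {} \<and> (\<forall>u\<in>S. \<forall>v\<in>S. (induced_rel S E)\<^sup>*\<^sup>* u v)"

definition components :: "'a set \<Rightarrow> ('a \<Rightarrow> 'a \<Rightarrow> bool) \<Rightarrow> 'a set set" where
  "components S E = (\<lambda>u. {v \<in> S. (induced_rel S E)\<^sup>*\<^sup>* u v}) ` S"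

definition districting_plan ::
  "'v set \<Rightarrow> ('v \<Rightarrow> 'v \<Rightarrow> bool) \<Rightarrow> ('v \<Rightarrow> real) \<Rightarrow> nat \<Rightarrow> real \<Rightarrow> (nat \<Rightarrow> 'v set) \<Rightarrow> bool" where
  "districting_plan V E p k \<epsilon> VV \<longleftrightarrow>
     (\<Union>m<k. VV m) = V \<and>
     (\<forall>m<k. \<forall>l<k. m \<noteq> l \<longrightarrow> VV m \<inter> VV l = {}) \<and>
     (\<forall>m<k. connected_set (VV m) E) \<and>
     (\<forall>m<k. (1 - \<epsilon>) * (sum p V / real k) \<le> sum p (VV m)
            \<and> sum p (VV m) \<le> (1 + \<epsilon>) * (sum p V / real k))"

text \<open>Adjacency in the district dual graph G_P (vertices w_0..w_(k-1) = indices m < k).\<close>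
definition dual_adj :: "('v \<Rightarrow> 'v \<Rightarrow> bool) \<Rightarrow> (nat \<Rightarrow> 'v set) \<Rightarrow> nat \<Rightarrow> nat \<Rightarrow> bool" where
  "dual_adj E VV m l \<longleftrightarrow> m \<noteq> l \<and> (\<exists>u\<in>VV m. \<exists>v\<in>VV l. E u v)"

definition sublevel :: "'a set \<Rightarrow> ('a \<Rightarrow> real) \<Rightarrow> real \<Rightarrow> 'a set" where
  "sublevel H F t = {v \<in> H. F v \<le> t}"

definition strict_sublevel :: "'a set \<Rightarrow> ('a \<Rightarrow> real) \<Rightarrow> real \<Rightarrow> 'a set" where
  "strict_sublevel H F t = {v \<in> H. F v < t}"

definition merged_births :: "'a set \<Rightarrow> ('a \<Rightarrow> 'a \<Rightarrow> bool) \<Rightarrow> ('a \<Rightarrow> real) \<Rightarrow> real \<Rightarrow> 'a set \<Rightarrow> real multiset" where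
  "merged_births H E F t C =
     image_mset (\<lambda>c. Min (F ` c)) (mset_set {c \<in> components (strict_sublevel H F t) E. c \<subseteq> C})"

text \<open>Elder rule: at level t, inside each component C of H^t, all merging older components
  except one oldest die at t; each component of H lives forever from its minimal value.
  Points on the diagonal are omitted.\<close>
definition pd0 :: "'a set \<Rightarrow> ('a \<Rightarrow> 'a \<Rightarrow> bool) \<Rightarrow> ('a \<Rightarrow> real) \<Rightarrow> (real \<times> ereal) multiset" where
  "pd0 H E F =
     (\<Sum>C\<in>components H E. {# (Min (F ` C), PInfty) #}) +
     (\<Sum>t\<in>F ` H. \<Sum>C\<in>components (sublevel H F t) E.
        image_mset (\<lambda>b. (b, ereal t))
          (merged_births H E F t C - {# Min (set_mset (merged_births H E F t C)) #}))"

definition edist :: "ereal \<Rightarrow> ereal \<Rightarrow> ereal" where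
  "edist x y = (if x = y then 0 else \<bar>x - y\<bar>)"   (* \<infinity> - \<infinity> = 0 *)

definition pt_dist :: "real \<times> ereal \<Rightarrow> real \<times> ereal \<Rightarrow> ereal" where
  "pt_dist x y = max (ereal \<bar>fst x - fst y\<bar>) (edist (snd x) (snd y))"

definition diag_dist :: "real \<times> ereal \<Rightarrow> ereal" where
  "diag_dist x = (snd x - ereal (fst x)) / 2"

text \<open>Partial bijection between diagrams = multiset of matched pairs.\<close>
definition partial_matching ::
  "(real \<times> ereal) multiset \<Rightarrow> (real \<times> ereal) multiset \<Rightarrow> ((real \<times> ereal) \<times> (real \<times> ereal)) multiset \<Rightarrow> bool" where
  "partial_matching D1 D2 M \<longleftrightarrow> image_mset fst M \<subseteq># D1 \<and> image_mset snd M \<subseteq># D2"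

definition matching_cost ::
  "(real \<times> ereal) multiset \<Rightarrow> (real \<times> ereal) multiset \<Rightarrow> ((real \<times> ereal) \<times> (real \<times> ereal)) multiset \<Rightarrow> ereal" where
  "matching_cost D1 D2 M = Sup ({0}
      \<union> (\<lambda>xy. pt_dist (fst xy) (snd xy)) ` set_mset M
      \<union> diag_dist ` set_mset (D1 - image_mset fst M)
      \<union> diag_dist ` set_mset (D2 - image_mset snd M))"

definition bottleneck :: "(real \<times> ereal) multiset \<Rightarrow> (real \<times> ereal) multiset \<Rightarrow> ereal" where
  "bottleneck D1 D2 = Inf (matching_cost D1 D2 ` {M. partial_matching D1 D2 M})"

definition ratio :: "('v \<Rightarrow> real) \<Rightarrow> ('v \<Rightarrow> real) \<Rightarrow> 'v set \<Rightarrow> real" where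
  "ratio a b W = sum a W / sum b W"

end

theory Submission
  imports Defs "HOL-Library.Product_Lexorder"
begin

text \<open>
  Choose a total order on the vertices of the dual graph that refines the filtration values
  (a key). With respect to it, every vertex v contributes the point (F v, d v) to the degree-0
  diagram, where d v is the filtration value of the first stage of the key order at which v is
  connected to an older vertex (elder rule); this vertex-indexed diagram has the same off-diagonal
  part for every compatible key. For a fixed key, d is 1-Lipschitz in F, so filtrations within
  sup-distance c give vertex-indexed diagrams that are c-close under the identity permutation.
  Along the segment from F to F', the compatible key only has to change at finitely many crossing
  times, and chaining these pieces gives the stability bound: the bottleneck distance is at most
  the sup-distance of the filtrations.

  The isomorphism of dual graphs lets both filtrations be read on the same graph. Only districts i
  and j change, and the mediant identity expresses each change as the ratio b(V_ij)/b(Z) times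
  the difference in the statement, where Z is the new district; balance gives
  b(V_ij) \<le> p(V_ij) \<le> 2 \<epsilon> T and b(Z) \<ge> \<alpha> p(Z) \<ge> \<alpha> (1 - \<epsilon>) T.
\<close>

section \<open>Connected components of induced subgraphs\<close>

abbreviation reach :: "'a set \<Rightarrow> ('a \<Rightarrow> 'a \<Rightarrow> bool) \<Rightarrow> 'a \<Rightarrow> 'a \<Rightarrow> bool" where
  "reach S E \<equiv> (induced_rel S E)\<^sup>*\<^sup>*"

lemma reach_mono: "S \<subseteq> S' \<Longrightarrow> reach S E u v \<Longrightarrow> reach S' E u v"
  by (erule rtranclp_mono[THEN predicate2D, rotated]) (auto simp: induced_rel_def)

lemma reach_sym:
  assumes "symp E" "reach S E u v" shows "reach S E v u"
proof -
  have "symp (induced_rel S E)"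
    using assms(1) unfolding induced_rel_def symp_def by blast
  then show ?thesis using assms(2) by (metis symp_rtranclp sympD)
qed

lemma reach_imp_mem: "reach S E u v \<Longrightarrow> u \<noteq> v \<Longrightarrow> u \<in> S \<and> v \<in> S"
  by (induction rule: rtranclp_induct) (auto simp: induced_rel_def)

lemma components_cong:
  assumes "\<And>u v. u \<in> S \<Longrightarrow> v \<in> S \<Longrightarrow> E\<^sub>1 u v = E\<^sub>2 u v"
  shows "components S E\<^sub>1 = components S E\<^sub>2"
proof -
  have "induced_rel S E\<^sub>1 = induced_rel S E\<^sub>2"
    using assms by (auto simp: induced_rel_def fun_eq_iff)
  then show ?thesis unfolding components_def by simp
qed

definition component_of :: "'a set \<Rightarrow> ('a \<Rightarrow> 'a \<Rightarrow> bool) \<Rightarrow> 'a \<Rightarrow> 'a set" where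
  "component_of S E v = {u \<in> S. reach S E v u}"

lemma components_eq_image: "components S E = component_of S E ` S"
  unfolding components_def component_of_def ..

lemma component_of_self: "v \<in> S \<Longrightarrow> v \<in> component_of S E v"
  unfolding component_of_def by simp

lemma component_of_subset: "component_of S E v \<subseteq> S"
  unfolding component_of_def by auto

lemma component_of_mono: "S \<subseteq> S' \<Longrightarrow> component_of S E v \<subseteq> component_of S' E v"
  unfolding component_of_def by (auto intro: reach_mono)

lemma component_of_eq:
  assumes "symp E" "u \<in> component_of S E v"
  shows "component_of S E u = component_of S E v"
proof -
  have "reach S E v u" "reach S E u v"
    using assms reach_sym unfolding component_of_def by auto
  then show ?thesis
    unfolding component_of_def by (auto intro: rtranclp_trans)
qed

lemma component_of_in_components: "v \<in> S \<Longrightarrow> component_of S E v \<in> components S E"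
  unfolding components_eq_image by simp

lemma components_eq_component_of:
  assumes "symp E" "C \<in> components S E" "v \<in> C"
  shows "C = component_of S E v"
proof -
  obtain x where "C = component_of S E x"
    using assms(2) unfolding components_eq_image by blast
  then show ?thesis using component_of_eq[OF assms(1)] assms(3) by simp
qed

lemma components_disjoint:
  assumes "symp E" "C \<in> components S E" "C' \<in> components S E" "v \<in> C" "v \<in> C'"
  shows "C = C'"
  using components_eq_component_of[OF assms(1,2,4)] components_eq_component_of[OF assms(1,3,5)]
  by (rule trans_sym)

lemma components_subset: "C \<in> components S E \<Longrightarrow> C \<subseteq> S"
  unfolding components_eq_image component_of_def by auto

lemma components_nonempty: "C \<in> components S E \<Longrightarrow> C \<noteq> {}"
  unfolding components_eq_image by (metis component_of_self empty_iff imageE)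

lemma finite_components: "finite S \<Longrightarrow> finite (components S E)"
  unfolding components_eq_image by simp

section \<open>Elder-rule indexing of the diagram by vertices\<close>

text \<open>The key breaks ties of K by the vertex order, so it totally orders the vertices;
  ``older'' means ``smaller key''.\<close>

definition key :: "('a \<Rightarrow> real) \<Rightarrow> 'a \<Rightarrow> real \<times> 'a" where
  "key K u = (K u, u)"

lemma key_eq_iff [simp]: "key K u = key K v \<longleftrightarrow> u = v"
  unfolding key_def by (cases "u = v") auto

definition eldest :: "('a::linorder \<Rightarrow> real) \<Rightarrow> 'a set \<Rightarrow> 'a" where
  "eldest K C = arg_min_on (key K) C"

lemma eldest_in: "finite C \<Longrightarrow> C \<noteq> {} \<Longrightarrow> eldest K C \<in> C"
  unfolding eldest_def by (rule arg_min_if_finite)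

lemma eldest_le: "finite C \<Longrightarrow> x \<in> C \<Longrightarrow> key K (eldest K C) \<le> key K x"
  unfolding eldest_def by (rule arg_min_least) auto

lemma eldest_eqI:
  assumes "finite C" "x \<in> C" "\<And>y. y \<in> C \<Longrightarrow> key K x \<le> key K y"
  shows "eldest K C = x"
proof -
  have "eldest K C \<in> C"
    using eldest_in assms(1,2) by blast
  then have "key K (eldest K C) = key K x"
    using eldest_le[of C x K] assms by (intro antisym) auto
  then show ?thesis by simp
qed

definition key_compatible :: "'a::linorder set \<Rightarrow> ('a \<Rightarrow> real) \<Rightarrow> ('a \<Rightarrow> real) \<Rightarrow> bool" where
  "key_compatible H K G \<longleftrightarrow> (\<forall>u\<in>H. \<forall>v\<in>H. key K u \<le> key K v \<longrightarrow> G u \<le> G v)"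

lemma key_compatible_self: "key_compatible H G G"
  unfolding key_compatible_def key_def by (auto simp: less_eq_prod_def)

definition key_prefix :: "'a::linorder set \<Rightarrow> ('a \<Rightarrow> real) \<Rightarrow> 'a \<Rightarrow> 'a set" where
  "key_prefix H K w = {x \<in> H. key K x \<le> key K w}"

definition has_elder :: "'a::linorder set \<Rightarrow> ('a \<Rightarrow> 'a \<Rightarrow> bool) \<Rightarrow> ('a \<Rightarrow> real) \<Rightarrow> 'a \<Rightarrow> bool" where
  "has_elder S E K v \<longleftrightarrow> (\<exists>u. key K u < key K v \<and> reach S E v u)"

text \<open>A merge stage of v is a vertex w such that, once all vertices up to w in key order are
  present, v is connected to an older vertex. By the elder rule the class born at v dies at the
  first merge stage, so death is the least filtration value of a merge stage.\<close>

definition merge_stages :: "'a::linorder set \<Rightarrow> ('a \<Rightarrow> 'a \<Rightarrow> bool) \<Rightarrow> ('a \<Rightarrow> real) \<Rightarrow> 'a \<Rightarrow> 'a set" where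
  "merge_stages H E K v = {w \<in> H. has_elder (key_prefix H K w) E K v}"

definition death :: "'a::linorder set \<Rightarrow> ('a \<Rightarrow> 'a \<Rightarrow> bool) \<Rightarrow> ('a \<Rightarrow> real) \<Rightarrow> ('a \<Rightarrow> real) \<Rightarrow> 'a \<Rightarrow> ereal" where
  "death H E K G v =
     (if merge_stages H E K v = {} then \<infinity> else ereal (Min (G ` merge_stages H E K v)))"

lemma finite_merge_stages: "finite H \<Longrightarrow> finite (merge_stages H E K v)"
  unfolding merge_stages_def by simp

definition elder_point :: "'a::linorder set \<Rightarrow> ('a \<Rightarrow> 'a \<Rightarrow> bool) \<Rightarrow> ('a \<Rightarrow> real) \<Rightarrow> ('a \<Rightarrow> real) \<Rightarrow> 'a \<Rightarrow> real \<times> ereal" where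
  "elder_point H E K G v = (G v, death H E K G v)"

lemma has_elder_mono: "S \<subseteq> S' \<Longrightarrow> has_elder S E K v \<Longrightarrow> has_elder S' E K v"
  unfolding has_elder_def by (auto intro: reach_mono)

lemma has_elder_imp_mem:
  assumes "has_elder S E K v" shows "v \<in> S"
proof -
  obtain u where "key K u < key K v" "reach S E v u"
    using assms unfolding has_elder_def by blast
  then show ?thesis using reach_imp_mem by fastforce
qed

lemma has_elder_iff_ne_eldest:
  assumes "finite S" "v \<in> S"
  shows "has_elder S E K v \<longleftrightarrow> eldest K (component_of S E v) \<noteq> v"
proof -
  let ?C = "component_of S E v"
  have C: "finite ?C" "v \<in> ?C"
    using assms component_of_self finite_subset[OF component_of_subset] by metis+
  show ?thesis
  proof
    assume "has_elder S E K v"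
    then obtain u where "key K u < key K v" "reach S E v u"
      unfolding has_elder_def by blast
    then have "u \<in> ?C"
      using reach_imp_mem unfolding component_of_def by fastforce
    then have "key K (eldest K ?C) < key K v"
      using eldest_le[OF C(1)] \<open>key K u < key K v\<close> by (blast intro: le_less_trans)
    then show "eldest K ?C \<noteq> v" by auto
  next
    assume "eldest K ?C \<noteq> v"
    moreover have "eldest K ?C \<in> ?C" "key K (eldest K ?C) \<le> key K v"
      using eldest_in eldest_le C by blast+
    ultimately show "has_elder S E K v"
      unfolding has_elder_def component_of_def by (auto simp: order.strict_iff_order)
  qed
qed

lemma has_elder_iff_merge_stage:
  assumes "finite H" "S \<subseteq> H" and closed: "\<And>x y. x \<in> H \<Longrightarrow> y \<in> S \<Longrightarrow> key K x \<le> key K y \<Longrightarrow> x \<in> S"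
  shows "has_elder S E K v \<longleftrightarrow> (\<exists>w\<in>merge_stages H E K v. w \<in> S)"
proof
  assume elder: "has_elder S E K v"
  have "finite S" "S \<noteq> {}"
    using has_elder_imp_mem[OF elder] assms(1,2) finite_subset by blast+
  then obtain w where "w \<in> S" "key K w = Max (key K ` S)"
    using Max_in[of "key K ` S"] by (metis finite_imageI image_iff image_is_empty)
  with \<open>finite S\<close> have w: "w \<in> S" "\<And>x. x \<in> S \<Longrightarrow> key K x \<le> key K w"
    by (simp_all add: Max_ge)
  then have "S \<subseteq> key_prefix H K w"
    using assms(2) unfolding key_prefix_def by blast
  then have "w \<in> merge_stages H E K v"
    using elder has_elder_mono w(1) assms(2) unfolding merge_stages_def by blast
  then show "\<exists>w\<in>merge_stages H E K v. w \<in> S" using w(1) by blast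
next
  assume "\<exists>w\<in>merge_stages H E K v. w \<in> S"
  then obtain w where "w \<in> S" "has_elder (key_prefix H K w) E K v"
    unfolding merge_stages_def by blast
  moreover from \<open>w \<in> S\<close> have "key_prefix H K w \<subseteq> S"
    using closed unfolding key_prefix_def by blast
  ultimately show "has_elder S E K v" using has_elder_mono by blast
qed

definition on_diagonal :: "real \<times> ereal \<Rightarrow> bool" where
  "on_diagonal x \<longleftrightarrow> snd x = ereal (fst x)"

definition offdiagonal_points :: "'a set \<Rightarrow> ('a \<Rightarrow> real \<times> ereal) \<Rightarrow> (real \<times> ereal) multiset" where
  "offdiagonal_points H P = image_mset P (mset_set {v \<in> H. \<not> on_diagonal (P v)})"

lemma image_mset_mset_set_eq_sum: "image_mset f (mset_set A) = (\<Sum>a\<in>A. {#f a#})"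
  by (simp add: sum_unfold_sum_mset)

lemma mset_set_UN_disjoint:
  assumes "finite I" "\<And>i. i \<in> I \<Longrightarrow> finite (A i)"
    and "\<And>i j. i \<in> I \<Longrightarrow> j \<in> I \<Longrightarrow> i \<noteq> j \<Longrightarrow> A i \<inter> A j = {}"
  shows "mset_set (\<Union>i\<in>I. A i) = (\<Sum>i\<in>I. mset_set (A i))"
  using assms
proof (induction I rule: finite_induct)
  case (insert i I)
  have "A i \<inter> (\<Union>j\<in>I. A j) = {}"
    using insert.prems(2) insert.hyps(2) by blast
  then show ?case
    using insert by (simp add: mset_set_Union)
qed simp

lemma image_mset_sum: "image_mset f (\<Sum>i\<in>I. M i) = (\<Sum>i\<in>I. image_mset f (M i))"
  by (induction I rule: infinite_finite_induct) auto

lemma sublevel_subset: "sublevel H G t \<subseteq> H" "strict_sublevel H G t \<subseteq> H"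
  unfolding sublevel_def strict_sublevel_def by auto

lemma strict_sublevel_subset: "strict_sublevel H G t \<subseteq> sublevel H G t"
  unfolding sublevel_def strict_sublevel_def by auto

locale elder_rule =
  fixes H :: "'a::linorder set" and E :: "'a \<Rightarrow> 'a \<Rightarrow> bool" and K G :: "'a \<Rightarrow> real"
  assumes finite_H: "finite H" and symp_E: "symp E" and compatible: "key_compatible H K G"
begin

abbreviation "\<delta> \<equiv> death H E K G"

lemma le_if_key_le: "u \<in> H \<Longrightarrow> v \<in> H \<Longrightarrow> key K u \<le> key K v \<Longrightarrow> G u \<le> G v"
  using compatible unfolding key_compatible_def by blast

lemma G_eldest:
  assumes "C \<subseteq> H" "C \<noteq> {}"
  shows "G (eldest K C) = Min (G ` C)"
proof -
  have fin: "finite C" using assms(1) finite_H finite_subset by blast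
  then have el: "eldest K C \<in> C" using eldest_in assms(2) by blast
  show ?thesis
  proof (rule Min_eqI[symmetric])
    show "finite (G ` C)" "G (eldest K C) \<in> G ` C" using fin el by simp_all
    fix y assume "y \<in> G ` C"
    then obtain x where "x \<in> C" "y = G x" by blast
    then show "G (eldest K C) \<le> y"
      using le_if_key_le[of "eldest K C" x] eldest_le[OF fin \<open>x \<in> C\<close>] el assms(1) by auto
  qed
qed

lemma G_le_death:
  assumes "v \<in> H" shows "ereal (G v) \<le> \<delta> v"
proof -
  have "G v \<le> G w" if "w \<in> merge_stages H E K v" for w
  proof -
    have "v \<in> key_prefix H K w" "w \<in> H"
      using that has_elder_imp_mem unfolding merge_stages_def by blast+
    then show ?thesis using le_if_key_le unfolding key_prefix_def by blast
  qed
  moreover have "finite (merge_stages H E K v)"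
    using finite_merge_stages[OF finite_H] .
  ultimately show ?thesis
    unfolding death_def by simp
qed

lemma has_elder_sublevel_iff: "has_elder (sublevel H G t) E K v \<longleftrightarrow> \<delta> v \<le> ereal t"
proof -
  have "has_elder (sublevel H G t) E K v \<longleftrightarrow> (\<exists>w\<in>merge_stages H E K v. G w \<le> t)"
    using has_elder_iff_merge_stage[OF finite_H, of "sublevel H G t"] le_if_key_le
    unfolding sublevel_def merge_stages_def by fastforce
  moreover have "finite (merge_stages H E K v)"
    using finite_merge_stages[OF finite_H] .
  ultimately show ?thesis
    unfolding death_def by (auto simp: Min_le_iff)
qed

lemma has_elder_strict_sublevel_iff: "has_elder (strict_sublevel H G t) E K v \<longleftrightarrow> \<delta> v < ereal t"
proof -
  have "has_elder (strict_sublevel H G t) E K v \<longleftrightarrow> (\<exists>w\<in>merge_stages H E K v. G w < t)"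
    using has_elder_iff_merge_stage[OF finite_H, of "strict_sublevel H G t"] le_if_key_le
    unfolding strict_sublevel_def merge_stages_def by fastforce
  moreover have "finite (merge_stages H E K v)"
    using finite_merge_stages[OF finite_H] .
  ultimately show ?thesis
    unfolding death_def by (auto simp: Min_less_iff)
qed

lemma has_elder_iff_finite_death: "has_elder H E K v \<longleftrightarrow> \<delta> v \<noteq> \<infinity>"
  using has_elder_iff_merge_stage[OF finite_H, of H] unfolding death_def merge_stages_def
  by auto

lemma finite_component: "C \<in> components S E \<Longrightarrow> S \<subseteq> H \<Longrightarrow> finite C"
  using components_subset[of C S E] finite_subset[of C H] finite_H by blast

lemma eldest_component: "C \<in> components S E \<Longrightarrow> S \<subseteq> H \<Longrightarrow> eldest K C \<in> C"
  by (rule eldest_in[OF finite_component components_nonempty])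

lemma inj_on_eldest_components:
  assumes "S \<subseteq> H" shows "inj_on (eldest K) (components S E)"
proof (rule inj_onI)
  fix C C' assume C: "C \<in> components S E" "C' \<in> components S E" "eldest K C = eldest K C'"
  show "C = C'"
    using components_disjoint[OF symp_E C(1,2) eldest_component[OF C(1) assms]]
      eldest_component[OF C(2) assms] C(3) by simp
qed

lemma essential_iff_eldest:
  assumes "v \<in> H" shows "\<delta> v = \<infinity> \<longleftrightarrow> eldest K (component_of H E v) = v"
  using has_elder_iff_finite_death[of v] has_elder_iff_ne_eldest[OF finite_H assms, of E K] by simp

lemma essential_vertices: "{v \<in> H. \<delta> v = \<infinity>} = eldest K ` components H E"
proof (intro equalityI subsetI)
  fix v assume "v \<in> {v \<in> H. \<delta> v = \<infinity>}"
  then have "v \<in> H" "eldest K (component_of H E v) = v"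
    using essential_iff_eldest by auto
  then show "v \<in> eldest K ` components H E"
    by (metis component_of_in_components image_eqI)
next
  fix v assume "v \<in> eldest K ` components H E"
  then obtain C where C: "C \<in> components H E" "v = eldest K C" by blast
  then have "v \<in> C" using eldest_component by blast
  then have "v \<in> H" "C = component_of H E v"
    using components_subset[OF C(1)] components_eq_component_of[OF symp_E C(1)] by auto
  then have "eldest K (component_of H E v) = v"
    using C(2) by metis
  then show "v \<in> {v \<in> H. \<delta> v = \<infinity>}"
    using essential_iff_eldest \<open>v \<in> H\<close> by blast
qed

lemma essential_points:
  "(\<Sum>C\<in>components H E. {#(Min (G ` C), \<infinity>)#})
     = image_mset (elder_point H E K G) (mset_set {v \<in> H. \<delta> v = \<infinity>})"
proof -
  have "(\<Sum>C\<in>components H E. {#(Min (G ` C), \<infinity>)#})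
      = image_mset (\<lambda>C. (Min (G ` C), \<infinity>)) (mset_set (components H E))"
    by (simp add: image_mset_mset_set_eq_sum)
  also have "\<dots> = image_mset (elder_point H E K G \<circ> eldest K) (mset_set (components H E))"
  proof (rule image_mset_cong)
    fix C assume "C \<in># mset_set (components H E)"
    then have C: "C \<in> components H E" using finite_components[OF finite_H] by simp
    then have "\<delta> (eldest K C) = \<infinity>" using essential_vertices by blast
    then show "(Min (G ` C), \<infinity>) = (elder_point H E K G \<circ> eldest K) C"
      using G_eldest components_subset[OF C] components_nonempty[OF C]
      unfolding elder_point_def by simp
  qed
  also have "\<dots> = image_mset (elder_point H E K G) (mset_set {v \<in> H. \<delta> v = \<infinity>})"
    unfolding essential_vertices image_mset_mset_set[OF inj_on_eldest_components[OF order.refl], symmetric]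
    by (simp add: multiset.map_comp)
  finally show ?thesis .
qed

text \<open>The vertices of merging_eldests t C are the births listed by merged_births: the eldest
  vertex of each component of the strict sublevel set that lies in C.\<close>

definition merging_eldests :: "real \<Rightarrow> 'a set \<Rightarrow> 'a set" where
  "merging_eldests t C = {v \<in> C \<inter> strict_sublevel H G t.
     eldest K (component_of (strict_sublevel H G t) E v) = v}"

definition dying_at :: "real \<Rightarrow> 'a set \<Rightarrow> 'a set" where
  "dying_at t C = {v \<in> C. ereal (G v) < \<delta> v \<and> \<delta> v = ereal t}"

lemma dying_iff_merging_eldest:
  assumes C: "C \<in> components (sublevel H G t) E" and "v \<in> C"
  shows "v \<in> dying_at t C \<longleftrightarrow> v \<in> merging_eldests t C \<and> eldest K C \<noteq> v"
proof -
  let ?S = "sublevel H G t" and ?S' = "strict_sublevel H G t"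
  have fin: "finite ?S" "finite ?S'"
    using finite_subset[OF sublevel_subset(1) finite_H] finite_subset[OF sublevel_subset(2) finite_H]
    by auto
  have "v \<in> ?S" using components_subset[OF C] assms(2) by blast
  then have vH: "v \<in> H" and "G v \<le> t" unfolding sublevel_def by auto
  have "C = component_of ?S E v" using components_eq_component_of[OF symp_E C assms(2)] .
  then have "eldest K C \<noteq> v \<longleftrightarrow> has_elder ?S E K v"
    using has_elder_iff_ne_eldest[OF fin(1) \<open>v \<in> ?S\<close>] by simp
  also have "\<dots> \<longleftrightarrow> \<delta> v \<le> ereal t" by (rule has_elder_sublevel_iff)
  finally have old: "eldest K C \<noteq> v \<longleftrightarrow> \<delta> v \<le> ereal t" .
  show ?thesis
  proof (cases "G v < t")
    case True
    then have "v \<in> ?S'" using vH unfolding strict_sublevel_def by simp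
    then have "eldest K (component_of ?S' E v) = v \<longleftrightarrow> \<not> \<delta> v < ereal t"
      using has_elder_iff_ne_eldest[OF fin(2)] has_elder_strict_sublevel_iff by blast
    then show ?thesis
      using old True \<open>v \<in> ?S'\<close> assms(2) unfolding dying_at_def merging_eldests_def
      by (cases "\<delta> v") auto
  next
    case False
    then show ?thesis
      using \<open>G v \<le> t\<close> unfolding dying_at_def merging_eldests_def strict_sublevel_def by auto
  qed
qed

lemma merging_eldests_eq_image:
  assumes C: "C \<in> components (sublevel H G t) E"
  shows "merging_eldests t C = eldest K ` {c \<in> components (strict_sublevel H G t) E. c \<subseteq> C}"
proof (intro equalityI subsetI)
  let ?S' = "strict_sublevel H G t"
  fix v assume "v \<in> merging_eldests t C"
  then have v: "v \<in> C" "v \<in> ?S'" "eldest K (component_of ?S' E v) = v"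
    unfolding merging_eldests_def by auto
  have "C = component_of (sublevel H G t) E v"
    using components_eq_component_of[OF symp_E C v(1)] .
  then have "component_of ?S' E v \<subseteq> C"
    using component_of_mono[OF strict_sublevel_subset[of H G t], of E v] by simp
  then show "v \<in> eldest K ` {c \<in> components ?S' E. c \<subseteq> C}"
    using component_of_in_components[OF v(2)] v(3) by force
next
  let ?S' = "strict_sublevel H G t"
  fix v assume "v \<in> eldest K ` {c \<in> components ?S' E. c \<subseteq> C}"
  then obtain c where c: "c \<in> components ?S' E" "c \<subseteq> C" "eldest K c = v" by auto
  then have "v \<in> c" using eldest_component[OF c(1) sublevel_subset(2)] by simp
  then have "v \<in> ?S'" "c = component_of ?S' E v"
    using components_subset[OF c(1)] components_eq_component_of[OF symp_E c(1)] by auto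
  then show "v \<in> merging_eldests t C"
    using c \<open>v \<in> c\<close> unfolding merging_eldests_def by auto
qed

lemma merged_births_eq:
  assumes C: "C \<in> components (sublevel H G t) E"
  shows "merged_births H E G t C = image_mset G (mset_set (merging_eldests t C))"
proof -
  let ?cs = "{c \<in> components (strict_sublevel H G t) E. c \<subseteq> C}"
  have fin: "finite ?cs"
    using finite_components[OF finite_subset[OF sublevel_subset(2) finite_H]] by simp
  have inj: "inj_on (eldest K) ?cs"
    using inj_on_eldest_components[OF sublevel_subset(2)] by (rule inj_on_subset) auto
  have "merged_births H E G t C = image_mset (G \<circ> eldest K) (mset_set ?cs)"
    unfolding merged_births_def
  proof (rule image_mset_cong)
    fix c assume "c \<in># mset_set ?cs"
    then have "c \<in> components (strict_sublevel H G t) E" using fin by simp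
    then have "c \<subseteq> H" "c \<noteq> {}"
      using components_subset components_nonempty sublevel_subset(2)[of H G t] by blast+
    then show "Min (G ` c) = (G \<circ> eldest K) c"
      using G_eldest by simp
  qed
  also have "\<dots> = image_mset G (mset_set (eldest K ` ?cs))"
    by (simp add: image_mset_mset_set[OF inj, symmetric] multiset.map_comp)
  finally show ?thesis using merging_eldests_eq_image[OF C] by simp
qed

lemma eldest_merging_eldest:
  assumes C: "C \<in> components (sublevel H G t) E" and "merging_eldests t C \<noteq> {}"
  shows "eldest K C \<in> merging_eldests t C"
proof -
  let ?S' = "strict_sublevel H G t" and ?m = "eldest K C"
  have fin: "finite C" using finite_component[OF C sublevel_subset(1)] .
  obtain x where x: "x \<in> C" "G x < t"
    using assms(2) unfolding merging_eldests_def strict_sublevel_def by auto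
  have m: "?m \<in> C" "\<And>y. y \<in> C \<Longrightarrow> key K ?m \<le> key K y"
    using eldest_component[OF C sublevel_subset(1)] eldest_le[OF fin] by auto
  have CH: "C \<subseteq> H" using components_subset[OF C] sublevel_subset(1)[of H G t] by blast
  then have "G ?m < t" using le_if_key_le[of ?m x] m x by force
  then have "?m \<in> ?S'" using CH m(1) unfolding strict_sublevel_def by auto
  have "C = component_of (sublevel H G t) E ?m"
    using components_eq_component_of[OF symp_E C m(1)] .
  then have sub: "component_of ?S' E ?m \<subseteq> C"
    using component_of_mono[OF strict_sublevel_subset[of H G t], of E ?m] by simp
  have "eldest K (component_of ?S' E ?m) = ?m"
    using component_of_self[OF \<open>?m \<in> ?S'\<close>] finite_subset[OF sub fin] sub m(2)
    by (intro eldest_eqI) auto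
  then show ?thesis
    using m(1) \<open>?m \<in> ?S'\<close> unfolding merging_eldests_def by auto
qed

lemma level_points:
  assumes C: "C \<in> components (sublevel H G t) E"
  shows "image_mset (\<lambda>b. (b, ereal t))
           (merged_births H E G t C - {#Min (set_mset (merged_births H E G t C))#})
       = image_mset (elder_point H E K G) (mset_set (dying_at t C))"
proof (cases "merging_eldests t C = {}")
  case True
  then have "dying_at t C = {}"
    using dying_iff_merging_eldest[OF C] unfolding dying_at_def by auto
  then show ?thesis using True merged_births_eq[OF C] by simp
next
  case False
  let ?M = "merging_eldests t C" and ?m = "eldest K C"
  have CH: "C \<subseteq> H" using components_subset[OF C] sublevel_subset(1)[of H G t] by blast
  have fin: "finite ?M"
    using finite_component[OF C sublevel_subset(1)] unfolding merging_eldests_def by simp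
  have m: "?m \<in> ?M" using eldest_merging_eldest[OF C False] .
  have "G ?m \<le> G y" if "y \<in> ?M" for y
    using that m CH eldest_le[OF finite_component[OF C sublevel_subset(1)]] le_if_key_le
    unfolding merging_eldests_def by blast
  then have "Min (set_mset (merged_births H E G t C)) = G ?m"
    unfolding merged_births_eq[OF C] using fin m by (intro Min_eqI) auto
  moreover have "dying_at t C = ?M - {?m}"
    using dying_iff_merging_eldest[OF C] unfolding dying_at_def merging_eldests_def by auto
  moreover have "mset_set ?M = add_mset ?m (mset_set (?M - {?m}))"
    by (rule mset_set.remove[OF fin m])
  moreover have "elder_point H E K G v = (G v, ereal t)" if "v \<in> dying_at t C" for v
    using that unfolding dying_at_def elder_point_def by simp
  ultimately show ?thesis
    unfolding merged_births_eq[OF C] using fin by (auto simp: multiset.map_comp intro!: image_mset_cong)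
qed

lemma dying_vertices_UN:
  "{v \<in> H. ereal (G v) < \<delta> v \<and> \<delta> v \<noteq> \<infinity>}
     = (\<Union>t\<in>G ` H. \<Union>C\<in>components (sublevel H G t) E. dying_at t C)"
proof (intro equalityI subsetI)
  fix v assume v: "v \<in> {v \<in> H. ereal (G v) < \<delta> v \<and> \<delta> v \<noteq> \<infinity>}"
  let ?W = "merge_stages H E K v"
  have "?W \<noteq> {}" "finite ?W" "?W \<subseteq> H"
    using v finite_H unfolding death_def merge_stages_def by (auto split: if_splits)
  moreover have "Min (G ` ?W) \<in> G ` ?W"
    using \<open>?W \<noteq> {}\<close> \<open>finite ?W\<close> by (intro Min_in) auto
  ultimately have t: "\<delta> v = ereal (Min (G ` ?W))" "Min (G ` ?W) \<in> G ` H"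
    unfolding death_def by (simp, blast)
  then have "v \<in> sublevel H G (Min (G ` ?W))"
    using v unfolding sublevel_def by auto
  then show "v \<in> (\<Union>t\<in>G ` H. \<Union>C\<in>components (sublevel H G t) E. dying_at t C)"
    using component_of_in_components component_of_self v t unfolding dying_at_def by fastforce
next
  fix v assume "v \<in> (\<Union>t\<in>G ` H. \<Union>C\<in>components (sublevel H G t) E. dying_at t C)"
  then obtain t C where "C \<in> components (sublevel H G t) E" "v \<in> dying_at t C" by blast
  then show "v \<in> {v \<in> H. ereal (G v) < \<delta> v \<and> \<delta> v \<noteq> \<infinity>}"
    using components_subset sublevel_subset(1) unfolding dying_at_def by fastforce
qed

lemma finite_points:
  "(\<Sum>t\<in>G ` H. \<Sum>C\<in>components (sublevel H G t) E. image_mset (elder_point H E K G) (mset_set (dying_at t C)))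
     = image_mset (elder_point H E K G) (mset_set {v \<in> H. ereal (G v) < \<delta> v \<and> \<delta> v \<noteq> \<infinity>})"
proof -
  have fin: "finite (dying_at t C)" if "C \<in> components (sublevel H G t) E" for t C
    using finite_component[OF that sublevel_subset(1)] unfolding dying_at_def by simp
  have fin_comps: "finite (components (sublevel H G t) E)" for t
    using finite_components[OF finite_subset[OF sublevel_subset(1) finite_H]] .
  have inner: "mset_set (\<Union>C\<in>components (sublevel H G t) E. dying_at t C)
      = (\<Sum>C\<in>components (sublevel H G t) E. mset_set (dying_at t C))" for t
  proof (rule mset_set_UN_disjoint[OF fin_comps fin])
    fix C C' assume "C \<in> components (sublevel H G t) E" "C' \<in> components (sublevel H G t) E" "C \<noteq> C'"
    then show "dying_at t C \<inter> dying_at t C' = {}"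
      using components_disjoint[OF symp_E] unfolding dying_at_def by blast
  qed
  have outer: "mset_set (\<Union>t\<in>G ` H. \<Union>C\<in>components (sublevel H G t) E. dying_at t C)
      = (\<Sum>t\<in>G ` H. mset_set (\<Union>C\<in>components (sublevel H G t) E. dying_at t C))"
    by (rule mset_set_UN_disjoint) (use finite_H fin fin_comps in \<open>auto simp: dying_at_def\<close>)
  show ?thesis
    unfolding dying_vertices_UN outer inner image_mset_sum ..
qed

theorem pd0_eq_offdiagonal_elder_points: "pd0 H E G = offdiagonal_points H (elder_point H E K G)"
proof -
  let ?ess = "{v \<in> H. \<delta> v = \<infinity>}" and ?fin = "{v \<in> H. ereal (G v) < \<delta> v \<and> \<delta> v \<noteq> \<infinity>}"
  have "\<not> on_diagonal (elder_point H E K G v) \<longleftrightarrow> \<delta> v = \<infinity> \<or> (ereal (G v) < \<delta> v \<and> \<delta> v \<noteq> \<infinity>)"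
    if "v \<in> H" for v
    using G_le_death[OF that] unfolding on_diagonal_def elder_point_def by auto
  then have "{v \<in> H. \<not> on_diagonal (elder_point H E K G v)} = ?ess \<union> ?fin"
    by auto
  moreover have "?ess \<inter> ?fin = {}" "finite ?ess" "finite ?fin"
    using finite_H by auto
  ultimately have "offdiagonal_points H (elder_point H E K G)
      = image_mset (elder_point H E K G) (mset_set ?ess) + image_mset (elder_point H E K G) (mset_set ?fin)"
    unfolding offdiagonal_points_def by (simp add: mset_set_Union)
  moreover have "(\<Sum>t\<in>G ` H. \<Sum>C\<in>components (sublevel H G t) E.
        image_mset (\<lambda>b. (b, ereal t)) (merged_births H E G t C - {#Min (set_mset (merged_births H E G t C))#}))
      = image_mset (elder_point H E K G) (mset_set ?fin)"
    unfolding finite_points[symmetric] by (intro sum.cong refl level_points)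
  ultimately show ?thesis
    unfolding pd0_def using essential_points by simp
qed

end

section \<open>Matching vertex-indexed diagrams\<close>

lemma edist_commute: "edist x y = edist y x"
  unfolding edist_def by (cases x; cases y) auto

lemma edist_triangle: "edist x z \<le> edist x y + edist y z"
  unfolding edist_def by (cases x; cases y; cases z) auto

lemma pt_dist_self [simp]: "pt_dist x x = 0"
  unfolding pt_dist_def edist_def by simp

lemma pt_dist_commute: "pt_dist x y = pt_dist y x"
  unfolding pt_dist_def using edist_commute by (simp add: abs_minus_commute)

lemma pt_dist_triangle: "pt_dist x z \<le> pt_dist x y + pt_dist y z"
proof -
  have "ereal \<bar>fst x - fst z\<bar> \<le> ereal \<bar>fst x - fst y\<bar> + ereal \<bar>fst y - fst z\<bar>" by simp
  also have "\<dots> \<le> pt_dist x y + pt_dist y z" unfolding pt_dist_def by (intro add_mono) auto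
  finally have "ereal \<bar>fst x - fst z\<bar> \<le> pt_dist x y + pt_dist y z" .
  moreover have "edist (snd x) (snd z) \<le> pt_dist x y + pt_dist y z"
  proof -
    have "edist (snd x) (snd z) \<le> edist (snd x) (snd y) + edist (snd y) (snd z)"
      by (rule edist_triangle)
    also have "\<dots> \<le> pt_dist x y + pt_dist y z" unfolding pt_dist_def by (intro add_mono) auto
    finally show ?thesis .
  qed
  ultimately show ?thesis unfolding pt_dist_def by simp
qed

lemma diag_dist_le: "diag_dist y \<le> diag_dist x + pt_dist x y"
  unfolding diag_dist_def pt_dist_def edist_def
  by (cases "snd x"; cases "snd y")
     (auto simp: field_simps abs_real_def max_def split: if_splits)

lemma diag_dist_on_diagonal: "on_diagonal x \<Longrightarrow> diag_dist x = 0"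
  unfolding on_diagonal_def diag_dist_def by simp

definition near :: "real \<Rightarrow> real \<times> ereal \<Rightarrow> real \<times> ereal \<Rightarrow> bool" where
  "near c x y \<longleftrightarrow> pt_dist x y \<le> ereal c \<or> (diag_dist x \<le> ereal c \<and> diag_dist y \<le> ereal c)"

lemma near_commute: "near c x y \<longleftrightarrow> near c y x"
  unfolding near_def using pt_dist_commute by auto

lemma near_trans:
  assumes xy: "near a x y" and yz: "near b y z" and "0 \<le> a" "0 \<le> b"
  shows "near (a + b) x z"
proof -
  have sum: "ereal (a + b) = ereal a + ereal b" by simp
  have le: "ereal a \<le> ereal (a + b)" "ereal b \<le> ereal (a + b)" using assms(3,4) by auto
  consider (both) "pt_dist x y \<le> ereal a" "pt_dist y z \<le> ereal b"
    | (left) "pt_dist x y \<le> ereal a" "diag_dist y \<le> ereal b" "diag_dist z \<le> ereal b"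
    | (right) "diag_dist x \<le> ereal a" "diag_dist y \<le> ereal a" "pt_dist y z \<le> ereal b"
    | (none) "diag_dist x \<le> ereal a" "diag_dist z \<le> ereal b"
    using xy yz unfolding near_def by blast
  then show ?thesis
  proof cases
    case both
    have "pt_dist x z \<le> pt_dist x y + pt_dist y z" by (rule pt_dist_triangle)
    also have "\<dots> \<le> ereal (a + b)" unfolding sum using both by (rule add_mono)
    finally show ?thesis unfolding near_def by simp
  next
    case left
    have "diag_dist x \<le> diag_dist y + pt_dist y x" by (rule diag_dist_le)
    also have "\<dots> \<le> ereal (a + b)"
      unfolding sum add.commute[of "ereal a"] using left pt_dist_commute[of x y] by (intro add_mono) auto
    finally show ?thesis using order_trans[OF left(3) le(2)] unfolding near_def by simp
  next
    case right
    have "diag_dist z \<le> diag_dist y + pt_dist y z" by (rule diag_dist_le)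
    also have "\<dots> \<le> ereal (a + b)" unfolding sum using right by (intro add_mono) auto
    finally show ?thesis using order_trans[OF right(1) le(1)] unfolding near_def by simp
  next
    case none
    then show ?thesis using order_trans[OF none(1) le(1)] order_trans[OF none(2) le(2)]
      unfolding near_def by simp
  qed
qed

lemma diag_dist_le_if_near_on_diagonal: "near c x y \<Longrightarrow> on_diagonal y \<Longrightarrow> diag_dist x \<le> ereal c"
  using diag_dist_le[of x y] pt_dist_commute[of x y] diag_dist_on_diagonal[of y]
  unfolding near_def by auto

text \<open>Diagrams indexed by the same vertex set are compared through a permutation of the
  vertices; this makes closeness transitive, unlike partial matchings of multisets.\<close>

definition bij_close :: "'a set \<Rightarrow> real \<Rightarrow> ('a \<Rightarrow> real \<times> ereal) \<Rightarrow> ('a \<Rightarrow> real \<times> ereal) \<Rightarrow> bool" where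
  "bij_close H c P Q \<longleftrightarrow> (\<exists>\<sigma>. bij_betw \<sigma> H H \<and> (\<forall>v\<in>H. near c (P v) (Q (\<sigma> v))))"

lemma bij_close_pointwise: "(\<And>v. v \<in> H \<Longrightarrow> near c (P v) (Q v)) \<Longrightarrow> bij_close H c P Q"
  unfolding bij_close_def by (intro exI[of _ id]) auto

lemma bij_close_refl: "bij_close H 0 P P"
  by (rule bij_close_pointwise) (simp add: near_def)

lemma bij_close_trans:
  assumes "bij_close H a P Q" "bij_close H b Q R" "0 \<le> a" "0 \<le> b"
  shows "bij_close H (a + b) P R"
proof -
  obtain \<sigma> where \<sigma>: "bij_betw \<sigma> H H" "\<And>v. v \<in> H \<Longrightarrow> near a (P v) (Q (\<sigma> v))"
    using assms(1) unfolding bij_close_def by blast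
  obtain \<tau> where \<tau>: "bij_betw \<tau> H H" "\<And>v. v \<in> H \<Longrightarrow> near b (Q v) (R (\<tau> v))"
    using assms(2) unfolding bij_close_def by blast
  have "near (a + b) (P v) (R ((\<tau> \<circ> \<sigma>) v))" if "v \<in> H" for v
    using near_trans[OF \<sigma>(2)[OF that] \<tau>(2)[OF bij_betw_apply[OF \<sigma>(1) that]] assms(3,4)] that by simp
  then show ?thesis
    unfolding bij_close_def using bij_betw_trans[OF \<sigma>(1) \<tau>(1)] by blast
qed

lemma image_mset_mset_set_eq_imp_bij:
  assumes "finite A" "finite B" "image_mset f (mset_set A) = image_mset g (mset_set B)"
  shows "\<exists>\<sigma>. bij_betw \<sigma> A B \<and> (\<forall>a\<in>A. g (\<sigma> a) = f a)"
  using assms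
proof (induction A arbitrary: B rule: finite_induct)
  case empty
  then show ?case by (simp add: mset_set_empty_iff bij_betw_def)
next
  case (insert a A)
  have "f a \<in># image_mset g (mset_set B)"
    unfolding insert.prems(2)[symmetric] using insert.hyps by simp
  then obtain b where b: "b \<in> B" "g b = f a"
    using insert.prems(1) by auto
  have "image_mset f (mset_set A) = image_mset g (mset_set (B - {b}))"
    using insert.prems insert.hyps mset_set.remove[OF insert.prems(1) b(1)] b(2) by simp
  then obtain \<sigma> where \<sigma>: "bij_betw \<sigma> A (B - {b})" "\<forall>a\<in>A. g (\<sigma> a) = f a"
    using insert.IH insert.prems(1) by blast
  have "bij_betw (\<sigma>(a := b)) A (B - {b})"
    by (rule bij_betw_cong[THEN iffD2, OF _ \<sigma>(1)]) (use insert.hyps(2) in auto)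
  then have "bij_betw (\<sigma>(a := b)) (A \<union> {a}) ((B - {b}) \<union> {b})"
    using notIn_Un_bij_betw[of a A "\<sigma>(a := b)" "B - {b}"] insert.hyps(2) by simp
  moreover have "A \<union> {a} = insert a A" "(B - {b}) \<union> {b} = B" using b(1) by auto
  ultimately have "bij_betw (\<sigma>(a := b)) (insert a A) B" by simp
  moreover have "\<forall>x\<in>insert a A. g ((\<sigma>(a := b)) x) = f x"
    using \<sigma>(2) b(2) insert.hyps(2) by auto
  ultimately show ?case by blast
qed

lemma bij_close_if_offdiagonal_points_eq:
  assumes "finite H" "offdiagonal_points H P = offdiagonal_points H Q"
  shows "bij_close H 0 P Q"
proof -
  define A where "A = {v \<in> H. \<not> on_diagonal (P v)}"
  define B where "B = {v \<in> H. \<not> on_diagonal (Q v)}"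
  have AB: "finite A" "finite B" "A \<subseteq> H" "B \<subseteq> H"
    using assms(1) unfolding A_def B_def by auto
  obtain \<sigma>\<^sub>1 where \<sigma>\<^sub>1: "bij_betw \<sigma>\<^sub>1 A B" "\<forall>a\<in>A. Q (\<sigma>\<^sub>1 a) = P a"
    using image_mset_mset_set_eq_imp_bij[OF AB(1,2)] assms(2)
    unfolding offdiagonal_points_def A_def B_def by blast
  have "card (H - A) = card (H - B)"
    using bij_betw_same_card[OF \<sigma>\<^sub>1(1)] AB assms(1) by (simp add: card_Diff_subset)
  then obtain \<sigma>\<^sub>2 where \<sigma>\<^sub>2: "bij_betw \<sigma>\<^sub>2 (H - A) (H - B)"
    using finite_same_card_bij assms(1) by blast
  let ?\<sigma> = "\<lambda>v. if v \<in> A then \<sigma>\<^sub>1 v else \<sigma>\<^sub>2 v"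
  have "bij_betw ?\<sigma> (A \<union> (H - A)) (B \<union> (H - B))"
    by (rule bij_betw_disjoint_Un[OF \<sigma>\<^sub>1(1) \<sigma>\<^sub>2]) auto
  moreover have "A \<union> (H - A) = H" "B \<union> (H - B) = H" using AB by auto
  moreover have "near 0 (P v) (Q (?\<sigma> v))" if "v \<in> H" for v
  proof (cases "v \<in> A")
    case True
    then show ?thesis using \<sigma>\<^sub>1(2) by (simp add: near_def)
  next
    case False
    then have "\<sigma>\<^sub>2 v \<in> H - B" using bij_betw_apply[OF \<sigma>\<^sub>2] that by blast
    then show ?thesis
      using False that unfolding near_def A_def B_def by (simp add: diag_dist_on_diagonal)
  qed
  ultimately show ?thesis
    unfolding bij_close_def by (intro exI[of _ ?\<sigma>]) auto
qed

lemma bottleneck_le_if_bij_close: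
  assumes "finite H" "bij_close H c P Q" "0 \<le> c"
  shows "bottleneck (offdiagonal_points H P) (offdiagonal_points H Q) \<le> ereal c"
proof -
  obtain \<sigma> where \<sigma>: "bij_betw \<sigma> H H" "\<And>v. v \<in> H \<Longrightarrow> near c (P v) (Q (\<sigma> v))"
    using assms(2) unfolding bij_close_def by blast
  define A where "A = {v \<in> H. \<not> on_diagonal (P v)}"
  define B where "B = {v \<in> H. \<not> on_diagonal (Q v)}"
  define A\<^sub>0 where "A\<^sub>0 = {v \<in> A. \<sigma> v \<in> B \<and> pt_dist (P v) (Q (\<sigma> v)) \<le> ereal c}"
  define M where "M = image_mset (\<lambda>v. (P v, Q (\<sigma> v))) (mset_set A\<^sub>0)"
  let ?D1 = "offdiagonal_points H P" and ?D2 = "offdiagonal_points H Q"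
  have fin: "finite A" "finite B" "A\<^sub>0 \<subseteq> A" "\<sigma> ` A\<^sub>0 \<subseteq> B"
    using assms(1) unfolding A_def B_def A\<^sub>0_def by auto
  have inj: "inj_on \<sigma> A\<^sub>0"
    using bij_betw_imp_inj_on[OF \<sigma>(1)] inj_on_subset fin(3) unfolding A_def by blast
  have fst: "image_mset fst M = image_mset P (mset_set A\<^sub>0)"
    unfolding M_def by (simp add: multiset.map_comp o_def)
  have snd: "image_mset snd M = image_mset Q (mset_set (\<sigma> ` A\<^sub>0))"
    unfolding M_def image_mset_mset_set[OF inj, symmetric] by (simp add: multiset.map_comp o_def)
  have D: "?D1 = image_mset P (mset_set A)" "?D2 = image_mset Q (mset_set B)"
    unfolding offdiagonal_points_def A_def B_def by simp_all
  have matching: "partial_matching ?D1 ?D2 M"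
    unfolding partial_matching_def fst snd D
    using subset_imp_msubset_mset_set[OF fin(3,1)] subset_imp_msubset_mset_set[OF fin(4,2)]
    by (auto intro: image_mset_subseteq_mono)
  have cost: "matching_cost ?D1 ?D2 M \<le> ereal c"
  proof -
    have rest: "?D1 - image_mset fst M = image_mset P (mset_set (A - A\<^sub>0))"
      "?D2 - image_mset snd M = image_mset Q (mset_set (B - \<sigma> ` A\<^sub>0))"
      unfolding D fst snd mset_set_Diff[OF fin(1,3)] mset_set_Diff[OF fin(2,4)]
      by (simp_all add: image_mset_Diff subset_imp_msubset_mset_set fin)
    have "pt_dist (fst xy) (snd xy) \<le> ereal c" if "xy \<in># M" for xy
      using that fin(1,3) finite_subset unfolding M_def A\<^sub>0_def by auto
    moreover have "diag_dist (P v) \<le> ereal c" if "v \<in> A - A\<^sub>0" for v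
    proof -
      have v: "v \<in> H" "near c (P v) (Q (\<sigma> v))" using that \<sigma>(2) unfolding A_def by auto
      show ?thesis
      proof (cases "pt_dist (P v) (Q (\<sigma> v)) \<le> ereal c")
        case True
        then have "on_diagonal (Q (\<sigma> v))"
          using that bij_betw_apply[OF \<sigma>(1) v(1)] unfolding A\<^sub>0_def B_def by auto
        then show ?thesis using diag_dist_le_if_near_on_diagonal v(2) by blast
      qed (use v(2) near_def in auto)
    qed
    moreover have "diag_dist (Q y) \<le> ereal c" if "y \<in> B - \<sigma> ` A\<^sub>0" for y
    proof -
      have "y \<in> \<sigma> ` H"
        using that bij_betw_imp_surj_on[OF \<sigma>(1)] unfolding B_def by simp
      then obtain v where v: "v \<in> H" "\<sigma> v = y" by (rule imageE) simp
      then have near: "near c (P v) (Q (\<sigma> v))" using \<sigma>(2) by blast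
      show ?thesis
      proof (cases "pt_dist (P v) (Q (\<sigma> v)) \<le> ereal c")
        case True
        then have "on_diagonal (P v)"
          using that v unfolding A\<^sub>0_def A_def by auto
        then show ?thesis
          using diag_dist_le_if_near_on_diagonal near near_commute v(2) by blast
      qed (use near v(2) near_def in auto)
    qed
    ultimately show ?thesis
      unfolding matching_cost_def rest using assms(3) fin
      by (intro Sup_least) (auto simp: finite_subset)
  qed
  have "bottleneck ?D1 ?D2 \<le> matching_cost ?D1 ?D2 M"
    unfolding bottleneck_def using matching by (intro Inf_lower) simp
  then show ?thesis using cost by (rule order_trans)
qed

lemma bij_close_elder_points_if_compatible:
  assumes "finite H" "symp E" "key_compatible H K G" "key_compatible H K' G"
  shows "bij_close H 0 (elder_point H E K G) (elder_point H E K' G)"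
proof (rule bij_close_if_offdiagonal_points_eq[OF assms(1)])
  interpret K: elder_rule H E K G using assms(1-3) by unfold_locales
  interpret K': elder_rule H E K' G using assms(1,2,4) by unfold_locales
  show "offdiagonal_points H (elder_point H E K G) = offdiagonal_points H (elder_point H E K' G)"
    using K.pd0_eq_offdiagonal_elder_points K'.pd0_eq_offdiagonal_elder_points by simp
qed

lemma Min_image_diff_le:
  fixes f g :: "'a \<Rightarrow> real"
  assumes "finite A" "A \<noteq> {}" "\<And>x. x \<in> A \<Longrightarrow> \<bar>f x - g x\<bar> \<le> c"
  shows "\<bar>Min (f ` A) - Min (g ` A)\<bar> \<le> c"
proof -
  have "Min (g ` A) \<in> g ` A" "Min (f ` A) \<in> f ` A"
    using assms(1,2) by (intro Min_in; simp)+
  then obtain x y where x: "x \<in> A" "Min (g ` A) = g x" and y: "y \<in> A" "Min (f ` A) = f y"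
    by (metis imageE)
  have "Min (f ` A) \<le> f x" "Min (g ` A) \<le> g y"
    using x(1) y(1) assms(1) by simp_all
  then show ?thesis using assms(3)[OF x(1)] assms(3)[OF y(1)] x(2) y(2) by linarith
qed

lemma near_elder_points:
  assumes "finite H" "\<And>v. v \<in> H \<Longrightarrow> \<bar>G v - G' v\<bar> \<le> c" "v \<in> H"
  shows "near c (elder_point H E K G v) (elder_point H E K G' v)"
proof -
  let ?W = "merge_stages H E K v"
  have "0 \<le> c" using assms(2,3) by force
  moreover have "finite ?W" "?W \<subseteq> H"
    using finite_merge_stages[OF assms(1)] unfolding merge_stages_def by auto
  txt \<open>The merge stages depend only on the key, so both deaths are minima over the same set.\<close>
  ultimately have "edist (death H E K G v) (death H E K G' v) \<le> ereal c"
    using Min_image_diff_le[of ?W G G' c] assms(2)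
    unfolding death_def edist_def by (auto simp: subset_iff)
  then show ?thesis
    using assms(2,3) unfolding near_def pt_dist_def elder_point_def by simp
qed

section \<open>Stability under perturbation of the filtration\<close>

lemma affine_zero_between:
  fixes a b r m :: real
  assumes "a + b * r < 0" "0 \<le> a + b * m" "r \<noteq> m"
  obtains x where "a + b * x = 0" "b \<noteq> 0" "min r m \<le> x" "x \<le> max r m" "x \<noteq> r"
proof -
  have "b * (m - r) > 0" using assms(1,2) by (simp add: algebra_simps)
  then have b: "b \<noteq> 0" by auto
  let ?x = "- a / b"
  have "a + b * ?x = 0" using b by simp
  moreover have "min r m \<le> ?x \<and> ?x \<le> max r m \<and> ?x \<noteq> r"
  proof (cases "b > 0")
    case True
    then show ?thesis
      using assms \<open>b * (m - r) > 0\<close> by (auto simp: field_simps zero_less_mult_iff min_def max_def)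
  next
    case False
    then have "b < 0" using b by simp
    then show ?thesis
      using assms \<open>b * (m - r) > 0\<close> by (auto simp: field_simps zero_less_mult_iff min_def max_def)
  qed
  ultimately show ?thesis using that b by blast
qed

locale linear_interpolation =
  fixes H :: "'a::linorder set" and E :: "'a \<Rightarrow> 'a \<Rightarrow> bool" and F\<^sub>0 F\<^sub>1 :: "'a \<Rightarrow> real" and \<Delta> :: real
  assumes finite_H: "finite H" and symp_E: "symp E"
    and shift_le: "\<And>v. v \<in> H \<Longrightarrow> \<bar>F\<^sub>1 v - F\<^sub>0 v\<bar> \<le> \<Delta>" and nonneg: "0 \<le> \<Delta>"
begin

definition F :: "real \<Rightarrow> 'a \<Rightarrow> real" where
  "F r v = F\<^sub>0 v + r * (F\<^sub>1 v - F\<^sub>0 v)"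

definition crossings :: "real set" where
  "crossings = {r. \<exists>u\<in>H. \<exists>v\<in>H. F\<^sub>1 u - F\<^sub>0 u \<noteq> F\<^sub>1 v - F\<^sub>0 v \<and> F r u = F r v}"

abbreviation D :: "real \<Rightarrow> 'a \<Rightarrow> real \<times> ereal" where
  "D r \<equiv> elder_point H E (F r) (F r)"

lemma F_diff: "F r v - F r u = (F\<^sub>0 v - F\<^sub>0 u) + ((F\<^sub>1 v - F\<^sub>0 v) - (F\<^sub>1 u - F\<^sub>0 u)) * r"
  unfolding F_def by (simp add: algebra_simps)

lemma finite_crossings: "finite crossings"
proof (rule finite_subset)
  show "crossings \<subseteq> (\<lambda>(u, v). (F\<^sub>0 u - F\<^sub>0 v) / ((F\<^sub>1 v - F\<^sub>0 v) - (F\<^sub>1 u - F\<^sub>0 u))) ` (H \<times> H)"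
  proof
    fix r assume "r \<in> crossings"
    then obtain u v where uv: "u \<in> H" "v \<in> H" "F\<^sub>1 u - F\<^sub>0 u \<noteq> F\<^sub>1 v - F\<^sub>0 v" "F r u = F r v"
      unfolding crossings_def by blast
    then have "r = (F\<^sub>0 u - F\<^sub>0 v) / ((F\<^sub>1 v - F\<^sub>0 v) - (F\<^sub>1 u - F\<^sub>0 u))"
      using F_diff[of r v u] by (simp add: field_simps)
    then show "r \<in> (\<lambda>(u, v). (F\<^sub>0 u - F\<^sub>0 v) / ((F\<^sub>1 v - F\<^sub>0 v) - (F\<^sub>1 u - F\<^sub>0 u))) ` (H \<times> H)"
      using uv(1,2) by force
  qed
qed (use finite_H in simp)

text \<open>No two vertices swap order strictly between consecutive crossings, so the order at the
  midpoint refines the orders at both ends.\<close>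

lemma key_compatible_in_gap:
  assumes "s < s'" "crossings \<inter> {s<..<s'} = {}" "r \<in> {s, s'}"
  shows "key_compatible H (F ((s + s') / 2)) (F r)"
  unfolding key_compatible_def
proof (intro ballI impI)
  let ?m = "(s + s') / 2"
  fix u v assume uv: "u \<in> H" "v \<in> H" "key (F ?m) u \<le> key (F ?m) v"
  then have "F ?m u \<le> F ?m v" unfolding key_def by (auto simp: less_eq_prod_def)
  show "F r u \<le> F r v"
  proof (rule ccontr)
    assume "\<not> F r u \<le> F r v"
    then have "(F\<^sub>0 v - F\<^sub>0 u) + ((F\<^sub>1 v - F\<^sub>0 v) - (F\<^sub>1 u - F\<^sub>0 u)) * r < 0"
      using F_diff[of r v u] by simp
    moreover have "0 \<le> (F\<^sub>0 v - F\<^sub>0 u) + ((F\<^sub>1 v - F\<^sub>0 v) - (F\<^sub>1 u - F\<^sub>0 u)) * ?m"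
      using F_diff[of ?m v u] \<open>F ?m u \<le> F ?m v\<close> by simp
    moreover have "r \<noteq> ?m" using assms(1,3) by auto
    ultimately obtain x where "(F\<^sub>0 v - F\<^sub>0 u) + ((F\<^sub>1 v - F\<^sub>0 v) - (F\<^sub>1 u - F\<^sub>0 u)) * x = 0"
        "(F\<^sub>1 v - F\<^sub>0 v) - (F\<^sub>1 u - F\<^sub>0 u) \<noteq> 0" and x: "min r ?m \<le> x" "x \<le> max r ?m" "x \<noteq> r"
      by (rule affine_zero_between)
    then have "F\<^sub>1 u - F\<^sub>0 u \<noteq> F\<^sub>1 v - F\<^sub>0 v" "F x u = F x v"
      using F_diff[of x v u] by simp_all
    then have "x \<in> crossings" using uv(1,2) unfolding crossings_def by auto
    moreover have "x \<in> {s<..<s'}" using x assms(1,3) by auto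
    ultimately show False using assms(2) by blast
  qed
qed

lemma bij_close_across_gap:
  assumes "s < s'" "crossings \<inter> {s<..<s'} = {}"
  shows "bij_close H ((s' - s) * \<Delta>) (D s) (D s')"
proof -
  let ?K = "F ((s + s') / 2)"
  have "bij_close H 0 (D s) (elder_point H E ?K (F s))"
    using bij_close_elder_points_if_compatible[OF finite_H symp_E key_compatible_self]
      key_compatible_in_gap[OF assms] by blast
  moreover have "bij_close H ((s' - s) * \<Delta>) (elder_point H E ?K (F s)) (elder_point H E ?K (F s'))"
  proof (intro bij_close_pointwise near_elder_points[OF finite_H])
    fix v assume "v \<in> H"
    have "F s v - F s' v = (s - s') * (F\<^sub>1 v - F\<^sub>0 v)"
      unfolding F_def by (simp add: algebra_simps)
    then have "\<bar>F s v - F s' v\<bar> = (s' - s) * \<bar>F\<^sub>1 v - F\<^sub>0 v\<bar>"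
      using assms(1) by (simp add: abs_mult)
    then show "\<bar>F s v - F s' v\<bar> \<le> (s' - s) * \<Delta>"
      using shift_le[OF \<open>v \<in> H\<close>] assms(1) by (simp add: mult_left_mono)
  qed
  moreover have "bij_close H 0 (elder_point H E ?K (F s')) (D s')"
    using bij_close_elder_points_if_compatible[OF finite_H symp_E _ key_compatible_self]
      key_compatible_in_gap[OF assms] by blast
  ultimately show ?thesis
    using bij_close_trans[of H 0 _ _ "(s' - s) * \<Delta>"] bij_close_trans[of H "(s' - s) * \<Delta>" _ _ 0]
      assms(1) nonneg by simp
qed

lemma bij_close_along_interpolation:
  assumes "0 \<le> r"
  shows "bij_close H (r * \<Delta>) (D 0) (D r)"
  using assms
proof (induction "card (crossings \<inter> {0<..<r})" arbitrary: r rule: less_induct)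
  case less
  show ?case
  proof (cases "crossings \<inter> {0<..<r} = {}")
    case True
    show ?thesis
    proof (cases "r = 0")
      case False
      then show ?thesis using bij_close_across_gap[of 0 r] True less.prems by simp
    qed (simp add: bij_close_refl)
  next
    case False
    let ?s = "Max (crossings \<inter> {0<..<r})"
    have fin: "finite (crossings \<inter> {0<..<r})" using finite_crossings by simp
    then have s: "?s \<in> crossings \<inter> {0<..<r}" using False by (rule Max_in)
    have "crossings \<inter> {0<..<?s} \<subset> crossings \<inter> {0<..<r}" using s by auto
    then have "card (crossings \<inter> {0<..<?s}) < card (crossings \<inter> {0<..<r})"
      by (rule psubset_card_mono[OF fin])
    then have "bij_close H (?s * \<Delta>) (D 0) (D ?s)" using less.hyps s by simp
    moreover have "crossings \<inter> {?s<..<r} = {}" using Max_ge[OF fin] s by fastforce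
    then have "bij_close H ((r - ?s) * \<Delta>) (D ?s) (D r)"
      using bij_close_across_gap s by simp
    ultimately have "bij_close H (?s * \<Delta> + (r - ?s) * \<Delta>) (D 0) (D r)"
      using s nonneg by (intro bij_close_trans) auto
    then show ?thesis by (simp add: algebra_simps)
  qed
qed

end

theorem bottleneck_pd0_le:
  fixes H :: "'a::linorder set"
  assumes "finite H" "symp E" "\<And>v. v \<in> H \<Longrightarrow> \<bar>F\<^sub>1 v - F\<^sub>0 v\<bar> \<le> \<Delta>" "0 \<le> \<Delta>"
  shows "bottleneck (pd0 H E F\<^sub>0) (pd0 H E F\<^sub>1) \<le> ereal \<Delta>"
proof -
  interpret linear_interpolation H E F\<^sub>0 F\<^sub>1 \<Delta> using assms by unfold_locales
  have pd0: "pd0 H E G = offdiagonal_points H (elder_point H E G G)" for G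
    using elder_rule.pd0_eq_offdiagonal_elder_points[OF elder_rule.intro[OF assms(1,2) key_compatible_self]] .
  have "F 0 = F\<^sub>0" "F 1 = F\<^sub>1" unfolding F_def by (simp_all add: fun_eq_iff)
  then have "bij_close H \<Delta> (elder_point H E F\<^sub>0 F\<^sub>0) (elder_point H E F\<^sub>1 F\<^sub>1)"
    using bij_close_along_interpolation[of 1] by simp
  then show ?thesis
    unfolding pd0 using bottleneck_le_if_bij_close assms(1,4) by blast
qed

section \<open>One-way perturbations of districting plans\<close>

lemma pd0_cong:
  assumes "\<And>u v. u \<in> H \<Longrightarrow> v \<in> H \<Longrightarrow> E\<^sub>1 u v = E\<^sub>2 u v"
  shows "pd0 H E\<^sub>1 G = pd0 H E\<^sub>2 G"
proof -
  have "components S E\<^sub>1 = components S E\<^sub>2" if "S \<subseteq> H" for S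
    by (rule components_cong) (use assms that in auto)
  then show ?thesis
    unfolding pd0_def merged_births_def by (simp add: sublevel_subset)
qed

lemma mediant_diff:
  fixes aX aY bX bY :: real
  assumes "0 < bX" "0 < bY"
  shows "(aX + aY) / (bX + bY) - aX / bX = bY / (bX + bY) * (aY / bY - aX / bX)"
    and "(aX + aY) / (bX + bY) - aX / bX = bY / bX * (aY / bY - (aX + aY) / (bX + bY))"
proof -
  have "bX + bY \<noteq> 0" "bX \<noteq> 0" "bY \<noteq> 0" using assms by auto
  moreover have "bX * bX + bX * bY > 0" "bX * (bX * bY) + bX * (bY * bY) > 0"
    using assms by (simp_all add: add_pos_pos)
  ultimately show "(aX + aY) / (bX + bY) - aX / bX = bY / (bX + bY) * (aY / bY - aX / bX)"
    and "(aX + aY) / (bX + bY) - aX / bX = bY / bX * (aY / bY - (aX + aY) / (bX + bY))"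
    by (simp_all add: field_simps)
qed

lemma ratio_union_diff:
  assumes "finite X" "finite Y" "X \<inter> Y = {}" "0 < sum b X" "0 < sum b Y"
  shows "ratio a b (X \<union> Y) - ratio a b X = sum b Y / sum b (X \<union> Y) * (ratio a b Y - ratio a b X)"
    and "ratio a b (X \<union> Y) - ratio a b X = sum b Y / sum b X * (ratio a b Y - ratio a b (X \<union> Y))"
proof -
  have sums: "sum a (X \<union> Y) = sum a X + sum a Y" "sum b (X \<union> Y) = sum b X + sum b Y"
    using sum.union_disjoint[OF assms(1-3)] by auto
  show "ratio a b (X \<union> Y) - ratio a b X = sum b Y / sum b (X \<union> Y) * (ratio a b Y - ratio a b X)"
    unfolding ratio_def sums by (rule mediant_diff(1)[OF assms(4,5)])
  show "ratio a b (X \<union> Y) - ratio a b X = sum b Y / sum b X * (ratio a b Y - ratio a b (X \<union> Y))"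
    unfolding ratio_def sums by (rule mediant_diff(2)[OF assms(4,5)])
qed

lemma moved_weight_ratio_le:
  fixes \<epsilon> \<alpha> T :: real
  assumes "0 < \<epsilon>" "\<epsilon> < 1" "0 < \<alpha>"
    and "finite X" "finite Y" "X \<inter> Y = {}" "0 < sum b Y" "sum b Y \<le> sum p Y"
    and "(1 - \<epsilon>) * T \<le> sum p X" "sum p (X \<union> Y) \<le> (1 + \<epsilon>) * T"
    and "(1 - \<epsilon>) * T \<le> sum p Z" "\<alpha> * sum p Z \<le> sum b Z"
  shows "sum b Y / sum b Z \<le> 2 * \<epsilon> / (\<alpha> * (1 - \<epsilon>))"
proof -
  have "sum p Y \<le> 2 * \<epsilon> * T"
    using sum.union_disjoint[OF assms(4-6), of p] assms(9,10) by (simp add: algebra_simps)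
  then have bY: "sum b Y \<le> 2 * \<epsilon> * T" using assms(8) by linarith
  then have "0 < T" using assms(1,7) by (smt (verit) mult_nonneg_nonpos)
  have "\<alpha> * ((1 - \<epsilon>) * T) \<le> \<alpha> * sum p Z"
    using assms(3,11) by (simp add: mult_left_mono)
  then have bZ: "\<alpha> * (1 - \<epsilon>) * T \<le> sum b Z" "0 < \<alpha> * (1 - \<epsilon>) * T"
    using assms(12) by (metis mult.assoc order_trans) (use assms(2,3) \<open>0 < T\<close> in simp)
  have "sum b Y / sum b Z \<le> (2 * \<epsilon> * T) / (\<alpha> * (1 - \<epsilon>) * T)"
    using bY bZ assms(1,7) \<open>0 < T\<close> by (intro frac_le) auto
  also have "\<dots> = 2 * \<epsilon> / (\<alpha> * (1 - \<epsilon>))" using \<open>0 < T\<close> by simp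
  finally show ?thesis .
qed

lemma ratio_remove_le:
  assumes "finite X" "finite Y" "X \<inter> Y = {}" "X \<noteq> {}" "Y \<noteq> {}"
    and "\<forall>v\<in>X \<union> Y. 0 < b v \<and> b v \<le> p v"
    and "0 < \<epsilon>" "\<epsilon> < 1" "0 < \<alpha>"
    and "(1 - \<epsilon>) * T \<le> sum p X" "sum p (X \<union> Y) \<le> (1 + \<epsilon>) * T" "\<alpha> * sum p X \<le> sum b X"
  shows "\<bar>ratio a b X - ratio a b (X \<union> Y)\<bar>
           \<le> 2 * \<epsilon> / (\<alpha> * (1 - \<epsilon>)) * \<bar>ratio a b Y - ratio a b (X \<union> Y)\<bar>"
proof -
  have b: "0 < sum b X" "0 < sum b Y" "sum b Y \<le> sum p Y"
    using assms(1,2,4-6) by (auto intro!: sum_pos sum_mono)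
  have "\<bar>ratio a b X - ratio a b (X \<union> Y)\<bar> = \<bar>ratio a b (X \<union> Y) - ratio a b X\<bar>"
    by (rule abs_minus_commute)
  also have "\<dots> = sum b Y / sum b X * \<bar>ratio a b Y - ratio a b (X \<union> Y)\<bar>"
    unfolding ratio_union_diff(2)[OF assms(1-3) b(1,2)] using b(1,2) by (simp add: abs_mult)
  also have "\<dots> \<le> 2 * \<epsilon> / (\<alpha> * (1 - \<epsilon>)) * \<bar>ratio a b Y - ratio a b (X \<union> Y)\<bar>"
    using moved_weight_ratio_le[OF assms(7-9,1-3) b(2,3) assms(10,11,10,12)]
    by (rule mult_right_mono) simp
  finally show ?thesis .
qed

lemma ratio_add_le:
  assumes "finite X" "finite Y" "X \<inter> Y = {}" "X \<noteq> {}" "Y \<noteq> {}"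
    and "\<forall>v\<in>X \<union> Y. 0 < b v \<and> b v \<le> p v"
    and "0 < \<epsilon>" "\<epsilon> < 1" "0 < \<alpha>"
    and "(1 - \<epsilon>) * T \<le> sum p X" "sum p (X \<union> Y) \<le> (1 + \<epsilon>) * T"
    and "\<alpha> * sum p (X \<union> Y) \<le> sum b (X \<union> Y)"
  shows "\<bar>ratio a b (X \<union> Y) - ratio a b X\<bar> \<le> 2 * \<epsilon> / (\<alpha> * (1 - \<epsilon>)) * \<bar>ratio a b Y - ratio a b X\<bar>"
proof -
  have b: "0 < sum b X" "0 < sum b Y" "sum b Y \<le> sum p Y"
    using assms(1,2,4-6) by (auto intro!: sum_pos sum_mono)
  have "sum p Y \<ge> 0" using b(2,3) by simp
  then have bal: "(1 - \<epsilon>) * T \<le> sum p (X \<union> Y)"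
    using assms(10) sum.union_disjoint[OF assms(1-3), of p] by simp
  have "0 < sum b (X \<union> Y)" using b(1,2) sum.union_disjoint[OF assms(1-3), of b] by simp
  then have "\<bar>ratio a b (X \<union> Y) - ratio a b X\<bar> = sum b Y / sum b (X \<union> Y) * \<bar>ratio a b Y - ratio a b X\<bar>"
    unfolding ratio_union_diff(1)[OF assms(1-3) b(1,2)] using b(2) by (simp add: abs_mult)
  also have "\<dots> \<le> 2 * \<epsilon> / (\<alpha> * (1 - \<epsilon>)) * \<bar>ratio a b Y - ratio a b X\<bar>"
    using moved_weight_ratio_le[OF assms(7-9,1-3) b(2,3) assms(10,11) bal assms(12)]
    by (rule mult_right_mono) simp
  finally show ?thesis .
qed

lemma districting_plan_district:
  assumes "districting_plan V E p k \<epsilon> VV" "finite V" "l < k"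
  shows "VV l \<subseteq> V" "finite (VV l)" "VV l \<noteq> {}"
    and "(1 - \<epsilon>) * (sum p V / real k) \<le> sum p (VV l)" "sum p (VV l) \<le> (1 + \<epsilon>) * (sum p V / real k)"
proof -
  show "VV l \<subseteq> V" using assms(1,3) unfolding districting_plan_def by auto
  then show "finite (VV l)" using assms(2) finite_subset by blast
  show "VV l \<noteq> {}"
    "(1 - \<epsilon>) * (sum p V / real k) \<le> sum p (VV l)" "sum p (VV l) \<le> (1 + \<epsilon>) * (sum p V / real k)"
    using assms(1,3) unfolding districting_plan_def connected_set_def by auto
qed

lemma one_way_perturbation_shift_le:
  fixes V :: "'v set" and p a b :: "'v \<Rightarrow> real" and VV VV' :: "nat \<Rightarrow> 'v set"
  assumes finV: "finite V" and p_pos: "\<forall>v\<in>V. p v > 0" and eps: "0 < \<epsilon>" "\<epsilon> < 1"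
    and P: "districting_plan V E p k \<epsilon> VV" and P': "districting_plan V E p k \<epsilon> VV'"
    and ij: "i < k" "j < k" "i \<noteq> j" and Vij: "Vij \<noteq> {}" "Vij \<subseteq> VV i"
    and Vi': "VV' i = VV i - Vij" and Vj': "VV' j = VV j \<union> Vij"
    and Vm': "\<forall>m<k. m \<noteq> i \<and> m \<noteq> j \<longrightarrow> VV' m = VV m"
    and ab: "\<forall>v\<in>V. 0 < b v \<and> b v \<le> p v" and alpha: "0 < \<alpha>"
    and alpha_bd: "\<forall>W\<in>{VV i, VV' i, VV j, VV' j}. sum b W / sum p W \<ge> \<alpha>"
    and "m < k"
  shows "\<bar>ratio a b (VV' m) - ratio a b (VV m)\<bar>
           \<le> 2 * \<epsilon> / (\<alpha> * (1 - \<epsilon>)) *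
              max \<bar>ratio a b Vij - ratio a b (VV i)\<bar> \<bar>ratio a b Vij - ratio a b (VV j)\<bar>"
proof -
  let ?c = "2 * \<epsilon> / (\<alpha> * (1 - \<epsilon>))"
    and ?M = "max \<bar>ratio a b Vij - ratio a b (VV i)\<bar> \<bar>ratio a b Vij - ratio a b (VV j)\<bar>"
  have c: "0 \<le> ?c" using eps alpha by simp
  note Pi = districting_plan_district[OF P finV ij(1)]
    and Pj = districting_plan_district[OF P finV ij(2)]
    and P'i = districting_plan_district[OF P' finV ij(1)]
    and P'j = districting_plan_district[OF P' finV ij(2)]
  have weight: "\<alpha> * sum p W \<le> sum b W" if "W \<in> {VV i, VV' i, VV j, VV' j}" for W
  proof -
    have "W \<subseteq> V" "W \<noteq> {}" using that Pi Pj P'i P'j by auto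
    then have "0 < sum p W" using p_pos finV finite_subset by (intro sum_pos) auto
    moreover have "\<alpha> \<le> sum b W / sum p W" using alpha_bd that by blast
    ultimately show ?thesis by (simp add: pos_le_divide_eq mult.commute)
  qed
  have b_pos: "\<forall>v\<in>X. 0 < b v \<and> b v \<le> p v" if "X \<subseteq> V" for X
    using that ab by auto
  have Vij_fin: "finite Vij" using finite_subset[OF Vij(2) Pi(2)] .
  consider "m = i" | "m = j" | "m \<noteq> i" "m \<noteq> j" by blast
  then show ?thesis
  proof cases
    case 1
    have split: "VV' i \<union> Vij = VV i" "VV' i \<inter> Vij = {}" using Vi' Vij(2) by auto
    have "\<bar>ratio a b (VV' i) - ratio a b (VV i)\<bar> \<le> ?c * \<bar>ratio a b Vij - ratio a b (VV i)\<bar>"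
      using ratio_remove_le[OF P'i(2) Vij_fin split(2) P'i(3) Vij(1) b_pos[OF Pi(1), folded split(1)]
          eps alpha P'i(4) _ weight] split(1) Pi(5) by simp
    then show ?thesis using 1 c by (smt (verit) max.cobounded1 mult_left_mono)
  next
    case 2
    have "VV j \<inter> VV i = {}"
      using P ij unfolding districting_plan_def by (metis (no_types))
    then have split: "VV j \<union> Vij = VV' j" "VV j \<inter> Vij = {}"
      using Vj' Vij(2) by auto
    have "\<bar>ratio a b (VV' j) - ratio a b (VV j)\<bar> \<le> ?c * \<bar>ratio a b Vij - ratio a b (VV j)\<bar>"
      using ratio_add_le[OF Pj(2) Vij_fin split(2) Pj(3) Vij(1) b_pos[OF P'j(1), folded split(1)]
          eps alpha Pj(4) _ weight] split(1) P'j(5) by simp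
    then show ?thesis using 2 c by (smt (verit) max.cobounded2 mult_left_mono)
  next
    case 3
    then have "VV' m = VV m" using Vm' \<open>m < k\<close> by simp
    moreover have "0 \<le> ?c * ?M" using c by (rule mult_nonneg_nonneg) simp
    ultimately show ?thesis by simp
  qed
qed

theorem mainTheorem2:
  fixes V :: "'v set" and E :: "'v \<Rightarrow> 'v \<Rightarrow> bool" and p a b :: "'v \<Rightarrow> real"
    and k i j :: nat and \<epsilon> \<alpha> :: real and VV VV' :: "nat \<Rightarrow> 'v set" and Vij :: "'v set"
  assumes finV: "finite V"
    and E_in: "\<forall>u v. E u v \<longrightarrow> u \<in> V \<and> v \<in> V"
    and E_sym: "\<forall>u v. E u v \<longrightarrow> E v u"
    and p_pos: "\<forall>v\<in>V. p v > 0"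
    and k2: "k \<ge> 2"
    and eps: "0 < \<epsilon>" "\<epsilon> < 1"
    and P: "districting_plan V E p k \<epsilon> VV"
    and P': "districting_plan V E p k \<epsilon> VV'"
    and ij: "i < k" "j < k" "i \<noteq> j"
    and Vij: "Vij \<noteq> {}" "Vij \<subseteq> VV i"
    and Vi': "VV' i = VV i - Vij"
    and Vj': "VV' j = VV j \<union> Vij"
    and Vm': "\<forall>m<k. m \<noteq> i \<and> m \<noteq> j \<longrightarrow> VV' m = VV m"
    and iso: "\<forall>m<k. \<forall>l<k. dual_adj E VV m l \<longleftrightarrow> dual_adj E VV' m l"
    and ab: "\<forall>v\<in>V. 0 \<le> a v \<and> a v \<le> b v \<and> b v \<le> p v \<and> b v > 0"
    and alpha: "\<alpha> > 0"
    and alpha_bd: "\<forall>W\<in>{VV i, VV' i, VV j, VV' j}. sum b W / sum p W \<ge> \<alpha>"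
  shows "bottleneck
           (pd0 {..<k} (dual_adj E VV) (\<lambda>m. ratio a b (VV m)))
           (pd0 {..<k} (dual_adj E VV') (\<lambda>m. ratio a b (VV' m)))
         \<le> ereal (2 * \<epsilon> / (\<alpha> * (1 - \<epsilon>)) *
              max \<bar>ratio a b Vij - ratio a b (VV i)\<bar> \<bar>ratio a b Vij - ratio a b (VV j)\<bar>)"
proof -
  let ?F = "\<lambda>m. ratio a b (VV m)" and ?F' = "\<lambda>m. ratio a b (VV' m)"
  let ?\<Delta> = "2 * \<epsilon> / (\<alpha> * (1 - \<epsilon>)) *
              max \<bar>ratio a b Vij - ratio a b (VV i)\<bar> \<bar>ratio a b Vij - ratio a b (VV j)\<bar>"
  have "\<And>m. m \<in> {..<k} \<Longrightarrow> \<bar>?F' m - ?F m\<bar> \<le> ?\<Delta>"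
    using one_way_perturbation_shift_le[OF finV p_pos eps P P' ij Vij Vi' Vj' Vm' _ alpha alpha_bd] ab
    by simp
  moreover have "0 \<le> ?\<Delta>" using eps alpha by simp
  moreover have "symp (dual_adj E VV)"
    using E_sym unfolding dual_adj_def symp_def by blast
  moreover have "pd0 {..<k} (dual_adj E VV') ?F' = pd0 {..<k} (dual_adj E VV) ?F'"
    using iso by (intro pd0_cong) auto
  ultimately show ?thesis
    using bottleneck_pd0_le[of "{..<k}" "dual_adj E VV" ?F' ?F ?\<Delta>] by simp
qed
end
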